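(* Let $(M_n,d_n,x_n)_{n\in\mathbb{N}}$ be a sequence of pointed geodesic spaces each satisfying the symmetric orthogonality property $(SO)$ (resp. its stable version $(SO^* )$), and let $\omega$ be a non-principal ultrafilter on $\mathbb{N}$. If the ultralimit $\lim_\omega(M_n,d_n,x_n)$ is uniquely geodesic and nearest point projections onto its compact convex sets are unique, then $\lim_\omega(M_n,d_n,x_n)$ satisfies $(SO)$ (resp. $(SO^* )$).
   Context: The ultralimit $\lim_\omega(M_n,d_n,x_n)$ is the set of sequences $(y_n)$, $y_n\in M_n$, with $\lim_\omega d_n(y_n,x_n)<\infty$, modulo the relation $\lim_\omega d_n(y_n,z_n)=0$, with metric $d_\omega((y_n),(z_n))=\lim_\omega d_n(y_n,z_n)$. Geodesics are maps $\gamma:[0,1]\to X$ with $\delta(\gamma_t,\gamma_s)=|t-s|\delta(\gamma_0,\gamma_1)$. For $p=\gamma_0=\eta_0$, $\gamma\perp_p\eta$ means $\delta(p,\gamma_t)\le\delta(\eta_s,\gamma_t)$ for all $s,t\in[0,1]$; $(SO)$ means $\gamma\perp_p\eta$ implies $\eta\perp_p\gamma$ for all such geodesics. $(SO^* )$ for $(X,\delta)$ means $X\times_2\mathbb{R}$ ($X\times\mathbb{R}$ with metric $\tilde\delta((x,t),(y,s))^2=\delta(x,y)^2+|t-s|^2$) satisfies $(SO)$. A set is convex if all geodesics between its points lie in it. *)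

theory Defs
  imports "HOL-Analysis.Analysis"
begin

definition geodesic :: "'p set \<Rightarrow> ('p \<Rightarrow> 'p \<Rightarrow> real) \<Rightarrow> (real \<Rightarrow> 'p) \<Rightarrow> bool" where
  "geodesic X \<delta> \<gamma> \<longleftrightarrow> \<gamma> ` {0..1} \<subseteq> X \<and>
     (\<forall>t\<in>{0..1}. \<forall>s\<in>{0..1}. \<delta> (\<gamma> t) (\<gamma> s) = \<bar>t - s\<bar> * \<delta> (\<gamma> 0) (\<gamma> 1))"

definition geodesic_space :: "'p set \<Rightarrow> ('p \<Rightarrow> 'p \<Rightarrow> real) \<Rightarrow> bool" where
  "geodesic_space X \<delta> \<longleftrightarrow> Metric_space X \<delta> \<and>
     (\<forall>x\<in>X. \<forall>y\<in>X. \<exists>\<gamma>. geodesic X \<delta> \<gamma> \<and> \<gamma> 0 = x \<and> \<gamma> 1 = y)"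

definition uniquely_geodesic :: "'p set \<Rightarrow> ('p \<Rightarrow> 'p \<Rightarrow> real) \<Rightarrow> bool" where
  "uniquely_geodesic X \<delta> \<longleftrightarrow> geodesic_space X \<delta> \<and>
     (\<forall>\<gamma> \<eta>. geodesic X \<delta> \<gamma> \<and> geodesic X \<delta> \<eta> \<and> \<gamma> 0 = \<eta> 0 \<and> \<gamma> 1 = \<eta> 1
        \<longrightarrow> (\<forall>t\<in>{0..1}. \<gamma> t = \<eta> t))"

definition convex_set :: "'p set \<Rightarrow> ('p \<Rightarrow> 'p \<Rightarrow> real) \<Rightarrow> 'p set \<Rightarrow> bool" where
  "convex_set X \<delta> C \<longleftrightarrow> C \<subseteq> X \<and>
     (\<forall>\<gamma>. geodesic X \<delta> \<gamma> \<and> \<gamma> 0 \<in> C \<and> \<gamma> 1 \<in> C \<longrightarrow> \<gamma> ` {0..1} \<subseteq> C)"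

definition unique_projections :: "'p set \<Rightarrow> ('p \<Rightarrow> 'p \<Rightarrow> real) \<Rightarrow> bool" where
  "unique_projections X \<delta> \<longleftrightarrow>
     (\<forall>K. K \<noteq> {} \<and> compactin (Metric_space.mtopology X \<delta>) K \<and> convex_set X \<delta> K \<longrightarrow>
        (\<forall>p\<in>X. \<exists>!q. q \<in> K \<and> (\<forall>k\<in>K. \<delta> p q \<le> \<delta> p k)))"

definition orth :: "('p \<Rightarrow> 'p \<Rightarrow> real) \<Rightarrow> (real \<Rightarrow> 'p) \<Rightarrow> (real \<Rightarrow> 'p) \<Rightarrow> bool" where
  "orth \<delta> \<gamma> \<eta> \<longleftrightarrow> (\<forall>s\<in>{0..1}. \<forall>t\<in>{0..1}. \<delta> (\<gamma> 0) (\<gamma> t) \<le> \<delta> (\<eta> s) (\<gamma> t))"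

definition SO :: "'p set \<Rightarrow> ('p \<Rightarrow> 'p \<Rightarrow> real) \<Rightarrow> bool" where
  "SO X \<delta> \<longleftrightarrow> (\<forall>\<gamma> \<eta>. geodesic X \<delta> \<gamma> \<and> geodesic X \<delta> \<eta> \<and> \<gamma> 0 = \<eta> 0 \<and> orth \<delta> \<gamma> \<eta>
      \<longrightarrow> orth \<delta> \<eta> \<gamma>)"

definition prod_l2 :: "('p \<Rightarrow> 'p \<Rightarrow> real) \<Rightarrow> 'p \<times> real \<Rightarrow> 'p \<times> real \<Rightarrow> real" where
  "prod_l2 \<delta> a b = sqrt ((\<delta> (fst a) (fst b))\<^sup>2 + \<bar>snd a - snd b\<bar>\<^sup>2)"

definition SO_star :: "'p set \<Rightarrow> ('p \<Rightarrow> 'p \<Rightarrow> real) \<Rightarrow> bool" where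
  "SO_star X \<delta> \<longleftrightarrow> SO (X \<times> (UNIV :: real set)) (prod_l2 \<delta>)"

definition nonprincipal_ultrafilter :: "nat filter \<Rightarrow> bool" where
  "nonprincipal_ultrafilter \<omega> \<longleftrightarrow> \<omega> \<noteq> bot \<and>
     (\<forall>P. eventually P \<omega> \<or> eventually (\<lambda>n. \<not> P n) \<omega>) \<and>
     (\<forall>k. eventually (\<lambda>n. n \<noteq> k) \<omega>)"

definition UL_seqs :: "nat filter \<Rightarrow> (nat \<Rightarrow> 'a set) \<Rightarrow> (nat \<Rightarrow> 'a \<Rightarrow> 'a \<Rightarrow> real)
    \<Rightarrow> (nat \<Rightarrow> 'a) \<Rightarrow> (nat \<Rightarrow> 'a) set" where
  "UL_seqs \<omega> M d x = {y. (\<forall>n. y n \<in> M n) \<and>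
      Lim \<omega> (\<lambda>n. ereal (d n (y n) (x n))) < \<infinity>}"

definition UL_pdist :: "nat filter \<Rightarrow> (nat \<Rightarrow> 'a \<Rightarrow> 'a \<Rightarrow> real) \<Rightarrow> (nat \<Rightarrow> 'a) \<Rightarrow> (nat \<Rightarrow> 'a) \<Rightarrow> real" where
  "UL_pdist \<omega> d y z = Lim \<omega> (\<lambda>n. d n (y n) (z n))"

definition UL_space :: "nat filter \<Rightarrow> (nat \<Rightarrow> 'a set) \<Rightarrow> (nat \<Rightarrow> 'a \<Rightarrow> 'a \<Rightarrow> real)
    \<Rightarrow> (nat \<Rightarrow> 'a) \<Rightarrow> (nat \<Rightarrow> 'a) set set" where
  "UL_space \<omega> M d x = (\<lambda>y. {z \<in> UL_seqs \<omega> M d x. UL_pdist \<omega> d y z = 0}) ` UL_seqs \<omega> M d x"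

definition UL_dist :: "nat filter \<Rightarrow> (nat \<Rightarrow> 'a \<Rightarrow> 'a \<Rightarrow> real)
    \<Rightarrow> (nat \<Rightarrow> 'a) set \<Rightarrow> (nat \<Rightarrow> 'a) set \<Rightarrow> real" where
  "UL_dist \<omega> d A B = UL_pdist \<omega> d (SOME y. y \<in> A) (SOME z. z \<in> B)"

end

theory Submission
  imports Defs
begin

text \<open>Let \<open>\<gamma> \<bottom>\<^sub>p \<eta>\<close> in the ultralimit and \<open>w = \<gamma> t\<close>. Orthogonality says that \<open>p = \<eta> 0\<close> is a
  nearest point of \<open>\<eta>\<close> to \<open>w\<close>; the image of \<open>\<eta>\<close> is compact and, by unique geodesicity,
  convex, so \<open>p\<close> is the only nearest point. Lift \<open>\<eta>\<close> to geodesics \<open>\<beta>\<^sub>n\<close> of \<open>M\<^sub>n\<close> between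
  representatives of its endpoints; their ultralimit is again a geodesic with the same endpoints,
  hence equals \<open>\<eta>\<close>. Nearest points \<open>q\<^sub>n\<close> of \<open>\<beta>\<^sub>n\<close> to \<open>w\<^sub>n\<close> converge to a nearest point of \<open>\<eta>\<close>
  to \<open>w\<close>, i.e. to \<open>p\<close>. In \<open>M\<^sub>n\<close> the geodesic from \<open>q\<^sub>n\<close> to \<open>w\<^sub>n\<close> is orthogonal to the part of
  \<open>\<beta>\<^sub>n\<close> beyond \<open>q\<^sub>n\<close>, and (SO) turns this into \<open>d(q\<^sub>n, \<beta>\<^sub>n r) \<le> d(w\<^sub>n, \<beta>\<^sub>n r)\<close>; in the limit
  \<open>d(p, \<eta> s) \<le> d(w, \<eta> s)\<close>, which is \<open>\<eta> \<bottom>\<^sub>p \<gamma>\<close>.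

  For (SO*) the same argument runs for the spaces \<open>M\<^sub>n \<times> \<real>\<close>, whose ultralimit is the product of
  the ultralimit with \<open>\<real>\<close>. Projections there are not assumed unique, but for \<open>0 < t < 1\<close> the
  equality case of the triangle inequality forces a second nearest point to have the height of \<open>p\<close>,
  and uniqueness reduces to the first factor; \<open>t = 1\<close> follows by continuity.\<close>

section \<open>Limits along ultrafilters\<close>

definition ultrafilter :: "'i filter \<Rightarrow> bool" where
  "ultrafilter F \<longleftrightarrow> F \<noteq> bot \<and> (\<forall>P. eventually P F \<or> eventually (\<lambda>n. \<not> P n) F)"

lemma ultrafilter_tendsto_Sup:
  fixes f :: "'i \<Rightarrow> 'b::{complete_linorder, linorder_topology}"
  assumes "ultrafilter F"
  shows "(f \<longlongrightarrow> Sup {c. eventually (\<lambda>n. c \<le> f n) F}) F"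
proof (rule order_tendstoI)
  fix a assume "a < Sup {c. eventually (\<lambda>n. c \<le> f n) F}"
  then obtain c where "eventually (\<lambda>n. c \<le> f n) F" "a < c"
    by (auto simp: less_Sup_iff)
  then show "eventually (\<lambda>n. a < f n) F"
    by (auto elim: eventually_mono)
next
  fix a assume a: "Sup {c. eventually (\<lambda>n. c \<le> f n) F} < a"
  then have "\<not> eventually (\<lambda>n. a \<le> f n) F"
    by (metis (mono_tags) Sup_upper leD mem_Collect_eq)
  then have "eventually (\<lambda>n. \<not> a \<le> f n) F"
    using assms by (auto simp: ultrafilter_def)
  then show "eventually (\<lambda>n. f n < a) F"
    by (auto elim: eventually_mono simp: not_le)
qed

lemma ultrafilter_tendsto_Lim:
  fixes f :: "'i \<Rightarrow> 'b::{complete_linorder, linorder_topology}"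
  assumes "ultrafilter F"
  shows "(f \<longlongrightarrow> Lim F f) F"
proof -
  have "F \<noteq> bot"
    using assms by (simp add: ultrafilter_def)
  then have "Lim F f = Sup {c. eventually (\<lambda>n. c \<le> f n) F}"
    by (rule tendsto_Lim[OF _ ultrafilter_tendsto_Sup[OF assms]])
  then show ?thesis
    using ultrafilter_tendsto_Sup[OF assms] by simp
qed

lemma ultrafilter_tendsto_Lim_real:
  fixes f :: "'i \<Rightarrow> real"
  assumes U: "ultrafilter F" and bounded: "eventually (\<lambda>n. \<bar>f n\<bar> \<le> B) F"
  shows "(f \<longlongrightarrow> Lim F f) F"
proof -
  have nontriv: "F \<noteq> bot"
    using U by (simp add: ultrafilter_def)
  let ?E = "Lim F (\<lambda>n. ereal (f n))"
  have lim: "((\<lambda>n. ereal (f n)) \<longlongrightarrow> ?E) F"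
    by (rule ultrafilter_tendsto_Lim[OF U])
  have "?E \<le> ereal B"
    by (rule tendsto_upperbound[OF lim _ nontriv]) (use bounded in \<open>auto elim: eventually_mono\<close>)
  moreover have "ereal (- B) \<le> ?E"
    by (rule tendsto_lowerbound[OF lim _ nontriv]) (use bounded in \<open>auto elim: eventually_mono\<close>)
  ultimately obtain L where "?E = ereal L"
    by (cases ?E) auto
  with lim nontriv show ?thesis
    by (metis lim_ereal tendsto_Lim)
qed

lemma ultrafilter_Lim_ereal_less_PInf_iff:
  fixes f :: "'i \<Rightarrow> real"
  assumes U: "ultrafilter F"
  shows "Lim F (\<lambda>n. ereal (f n)) < \<infinity> \<longleftrightarrow> (\<exists>B. eventually (\<lambda>n. f n \<le> B) F)"
proof -
  let ?E = "Lim F (\<lambda>n. ereal (f n))"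
  have lim: "((\<lambda>n. ereal (f n)) \<longlongrightarrow> ?E) F"
    by (rule ultrafilter_tendsto_Lim[OF U])
  show ?thesis
  proof
    assume "?E < \<infinity>"
    then obtain n :: nat where "?E < ereal (real n)"
      by (auto simp: less_PInf_Ex_of_nat)
    then have "eventually (\<lambda>k. ereal (f k) < ereal (real n)) F"
      by (rule order_tendstoD(2)[OF lim])
    then show "\<exists>B. eventually (\<lambda>k. f k \<le> B) F"
      by (intro exI[of _ "real n"]) (auto elim: eventually_mono)
  next
    assume "\<exists>B. eventually (\<lambda>n. f n \<le> B) F"
    then obtain B where "eventually (\<lambda>n. ereal (f n) \<le> ereal B) F"
      by auto
    then have "?E \<le> ereal B"
      using U by (intro tendsto_upperbound[OF lim]) (auto simp: ultrafilter_def)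
    then show "?E < \<infinity>"
      by (cases ?E) auto
  qed
qed

section \<open>Geodesics\<close>

lemma geodesic_in: "geodesic X \<delta> g \<Longrightarrow> r \<in> {0..1} \<Longrightarrow> g r \<in> X"
  unfolding geodesic_def by blast

lemma geodesic_dist:
  "geodesic X \<delta> g \<Longrightarrow> r \<in> {0..1} \<Longrightarrow> r' \<in> {0..1} \<Longrightarrow>
    \<delta> (g r) (g r') = \<bar>r - r'\<bar> * \<delta> (g 0) (g 1)"
  unfolding geodesic_def by blast

lemma affine_comb_in_unit_interval:
  fixes a b v :: real
  assumes "a \<in> {0..1}" "b \<in> {0..1}" "v \<in> {0..1}"
  shows "a + v * (b - a) \<in> {0..1}"
proof -
  have "a + v * (b - a) = (1 - v) * a + v * b"
    by (simp add: algebra_simps)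
  moreover have "(1 - v) * a \<le> 1 - v" "v * b \<le> v"
    using assms by (auto simp: mult_left_le)
  ultimately show ?thesis
    using assms by auto
qed

lemma geodesic_subpath:
  assumes g: "geodesic X \<delta> g" and a: "a \<in> {0..1}" and b: "b \<in> {0..1}"
  shows "geodesic X \<delta> (\<lambda>v. g (a + v * (b - a)))"
  unfolding geodesic_def
proof (intro conjI ballI)
  show "(\<lambda>v. g (a + v * (b - a))) ` {0..1} \<subseteq> X"
    using geodesic_in[OF g affine_comb_in_unit_interval[OF a b]] by auto
  fix t s :: real assume t: "t \<in> {0..1}" and s: "s \<in> {0..1}"
  have "\<delta> (g (a + t * (b - a))) (g (a + s * (b - a))) =
      \<bar>(a + t * (b - a)) - (a + s * (b - a))\<bar> * \<delta> (g 0) (g 1)"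
    using geodesic_dist[OF g affine_comb_in_unit_interval[OF a b t] affine_comb_in_unit_interval[OF a b s]] .
  also have "(a + t * (b - a)) - (a + s * (b - a)) = (t - s) * (b - a)"
    by (simp add: algebra_simps)
  also have "\<bar>(t - s) * (b - a)\<bar> * \<delta> (g 0) (g 1) = \<bar>t - s\<bar> * (\<bar>a - b\<bar> * \<delta> (g 0) (g 1))"
    by (simp add: abs_mult abs_minus_commute)
  also have "\<bar>a - b\<bar> * \<delta> (g 0) (g 1) = \<delta> (g (a + 0 * (b - a))) (g (a + 1 * (b - a)))"
    using geodesic_dist[OF g a b] by simp
  finally show "\<delta> (g (a + t * (b - a))) (g (a + s * (b - a))) =
      \<bar>t - s\<bar> * \<delta> (g (a + 0 * (b - a))) (g (a + 1 * (b - a)))" .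
qed

lemma uniquely_geodesicD:
  assumes "uniquely_geodesic X \<delta>" "geodesic X \<delta> g" "geodesic X \<delta> h" "g 0 = h 0" "g 1 = h 1"
    and "t \<in> {0..1}"
  shows "g t = h t"
  using assms unfolding uniquely_geodesic_def by blast

lemma uniquely_geodesic_imp_Metric_space: "uniquely_geodesic X \<delta> \<Longrightarrow> Metric_space X \<delta>"
  by (simp add: uniquely_geodesic_def geodesic_space_def)

context Metric_space
begin

lemma geodesic_dist_lipschitz:
  assumes g: "geodesic M d g" and y: "y \<in> M"
  shows "(d (g 0) (g 1))-lipschitz_on {0..1} (\<lambda>r. d y (g r))"
proof (rule lipschitz_onI)
  fix r r' :: real assume r: "r \<in> {0..1}" and r': "r' \<in> {0..1}"
  have "\<bar>d y (g r) - d y (g r')\<bar> \<le> d (g r) (g r')"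
    using triangle[OF y geodesic_in[OF g r] geodesic_in[OF g r']]
      triangle[OF y geodesic_in[OF g r'] geodesic_in[OF g r]] commute[of "g r'" "g r"] by linarith
  then show "dist (d y (g r)) (d y (g r')) \<le> d (g 0) (g 1) * dist r r'"
    using geodesic_dist[OF g r r'] by (simp add: dist_real_def mult.commute)
qed simp

lemma geodesic_nearest_point_exists:
  assumes "geodesic M d g" "y \<in> M"
  shows "\<exists>\<sigma>\<in>{0..1}. \<forall>r\<in>{0..1}. d y (g \<sigma>) \<le> d y (g r)"
  using continuous_attains_inf[OF compact_Icc _ lipschitz_on_continuous_on[OF geodesic_dist_lipschitz[OF assms]]]
  by simp

lemma compactin_geodesic_image:
  assumes g: "geodesic M d g"
  shows "compactin mtopology (g ` {0..1})"
proof (rule image_compactin)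
  show "compactin (top_of_set {0..1}) {0..1::real}"
    by (simp add: compact_imp_compactin_subtopology compactin_euclidean_iff)
  define L where "L = d (g 0) (g 1)"
  have L: "0 < L + 1"
    using nonneg[of "g 0" "g 1"] unfolding L_def by linarith
  show "continuous_map (top_of_set {0..1}) mtopology g"
    unfolding continuous_map_to_metric
  proof (intro ballI allI impI)
    fix r \<epsilon> :: real assume "r \<in> topspace (top_of_set {0..1})" and \<epsilon>: "0 < \<epsilon>"
    then have r: "r \<in> {0..1}"
      by simp
    show "\<exists>U. openin (top_of_set {0..1}) U \<and> r \<in> U \<and> (\<forall>r'\<in>U. g r' \<in> mball (g r) \<epsilon>)"
    proof (intro exI conjI ballI)
      show "openin (top_of_set {0..1}) (ball r (\<epsilon> / (L + 1)) \<inter> {0..1})"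
        by (rule openin_subtopology_Int) (simp add: open_openin[symmetric])
      show "r \<in> ball r (\<epsilon> / (L + 1)) \<inter> {0..1}"
        using r \<epsilon> L by simp
      fix r' assume "r' \<in> ball r (\<epsilon> / (L + 1)) \<inter> {0..1}"
      then have r': "r' \<in> {0..1}" and close: "\<bar>r - r'\<bar> * (L + 1) < \<epsilon>"
        using L by (auto simp: dist_real_def pos_less_divide_eq)
      have "d (g r) (g r') \<le> \<bar>r - r'\<bar> * (L + 1)"
        using geodesic_dist[OF g _ r', of r] r by (simp add: L_def mult_left_mono)
      then show "g r' \<in> mball (g r) \<epsilon>"
        using close geodesic_in[OF g r] geodesic_in[OF g r'] by (simp add: in_mball)
    qed
  qed
qed

lemma orth_if_orth_on_interior:
  assumes \<gamma>: "geodesic M d \<gamma>" and \<eta>: "geodesic M d \<eta>" and start: "\<gamma> 0 = \<eta> 0"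
    and interior: "\<And>s t. s \<in> {0..1} \<Longrightarrow> t \<in> {0<..<1} \<Longrightarrow> d (\<eta> 0) (\<eta> s) \<le> d (\<gamma> t) (\<eta> s)"
  shows "orth d \<eta> \<gamma>"
  unfolding orth_def
proof (intro ballI)
  fix s t :: real assume s: "s \<in> {0..1}" and t: "t \<in> {0..1}"
  have "d (\<eta> 0) (\<eta> s) \<le> d (\<gamma> 1) (\<eta> s)"
  proof -
    have left1: "eventually (\<lambda>t. t \<in> {0<..<1}) (at_left (1::real))"
      by (rule eventually_at_left_real) simp
    have "continuous_on {0..1} (\<lambda>t. d (\<eta> s) (\<gamma> t))"
      by (rule lipschitz_on_continuous_on[OF geodesic_dist_lipschitz[OF \<gamma> geodesic_in[OF \<eta> s]]])
    moreover have "eventually (\<lambda>t. t \<in> {0..1}) (at_left (1::real))"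
      using left1 by (rule eventually_mono) auto
    ultimately have lim: "((\<lambda>t. d (\<eta> s) (\<gamma> t)) \<longlongrightarrow> d (\<eta> s) (\<gamma> 1)) (at_left 1)"
      by (intro continuous_on_tendsto_compose[where g = "\<lambda>t. t", OF _ tendsto_ident_at]) auto
    have "eventually (\<lambda>t. d (\<eta> 0) (\<eta> s) \<le> d (\<eta> s) (\<gamma> t)) (at_left (1::real))"
      using left1 by (rule eventually_mono) (metis commute interior[OF s])
    from tendsto_lowerbound[OF lim this trivial_limit_at_left_real] show ?thesis
      by (simp only: commute)
  qed
  then show "d (\<eta> 0) (\<eta> s) \<le> d (\<gamma> t) (\<eta> s)"
    using t interior[OF s, of t] start by (cases "t = 0 \<or> t = 1") auto
qed

end

lemma convex_set_geodesic_image: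
  assumes ug: "uniquely_geodesic X \<delta>" and \<eta>: "geodesic X \<delta> \<eta>"
  shows "convex_set X \<delta> (\<eta> ` {0..1})"
  unfolding convex_set_def
proof (intro conjI allI impI)
  show "\<eta> ` {0..1} \<subseteq> X"
    using \<eta> by (simp add: geodesic_def)
  fix \<zeta> assume "geodesic X \<delta> \<zeta> \<and> \<zeta> 0 \<in> \<eta> ` {0..1} \<and> \<zeta> 1 \<in> \<eta> ` {0..1}"
  then obtain a b where \<zeta>: "geodesic X \<delta> \<zeta>" and a: "a \<in> {0..1}" "\<zeta> 0 = \<eta> a"
    and b: "b \<in> {0..1}" "\<zeta> 1 = \<eta> b"
    by blast
  have "\<zeta> t = \<eta> (a + t * (b - a))" if t: "t \<in> {0..1}" for t
    using uniquely_geodesicD[OF ug \<zeta> geodesic_subpath[OF \<eta> a(1) b(1)] _ _ t] a b by simp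
  then show "\<zeta> ` {0..1} \<subseteq> \<eta> ` {0..1}"
    using affine_comb_in_unit_interval[OF a(1) b(1)] by auto
qed

lemma geodesic_nearest_point_unique:
  assumes ug: "uniquely_geodesic X \<delta>" and proj: "unique_projections X \<delta>"
    and \<eta>: "geodesic X \<delta> \<eta>" and w: "w \<in> X"
    and nearest: "\<And>r. r \<in> {0..1} \<Longrightarrow> \<delta> w (\<eta> 0) \<le> \<delta> w (\<eta> r)"
    and s: "s \<in> {0..1}" and eq: "\<delta> w (\<eta> s) = \<delta> w (\<eta> 0)"
  shows "\<eta> s = \<eta> 0"
proof -
  interpret Metric_space X \<delta>
    by (rule uniquely_geodesic_imp_Metric_space[OF ug])
  let ?K = "\<eta> ` {0..1}"
  have "?K \<noteq> {} \<and> compactin mtopology ?K \<and> convex_set X \<delta> ?K"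
    using compactin_geodesic_image[OF \<eta>] convex_set_geodesic_image[OF ug \<eta>] by simp
  then have "\<exists>!q. q \<in> ?K \<and> (\<forall>k\<in>?K. \<delta> w q \<le> \<delta> w k)"
    by (rule proj[unfolded unique_projections_def, rule_format, OF _ w])
  then obtain q where q: "\<And>p. p \<in> ?K \<and> (\<forall>k\<in>?K. \<delta> w p \<le> \<delta> w k) \<Longrightarrow> p = q"
    by blast
  have "\<eta> 0 = q"
    using nearest by (intro q) auto
  moreover have "\<eta> s = q"
    using nearest s eq by (intro q) auto
  ultimately show ?thesis
    by simp
qed

lemma orth_unique_feet:
  assumes ug: "uniquely_geodesic X \<delta>" and proj: "unique_projections X \<delta>"
    and \<gamma>: "geodesic X \<delta> \<gamma>" and \<eta>: "geodesic X \<delta> \<eta>" and start: "\<gamma> 0 = \<eta> 0"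
    and orth: "orth \<delta> \<gamma> \<eta>" and t: "t \<in> {0..1}" and s: "s \<in> {0..1}"
    and eq: "\<delta> (\<gamma> t) (\<eta> s) = \<delta> (\<gamma> t) (\<eta> 0)"
  shows "\<eta> s = \<eta> 0"
proof (rule geodesic_nearest_point_unique[OF ug proj \<eta> geodesic_in[OF \<gamma> t] _ s eq])
  fix r :: real assume "r \<in> {0..1}"
  then have "\<delta> (\<gamma> 0) (\<gamma> t) \<le> \<delta> (\<eta> r) (\<gamma> t)"
    using orth t unfolding orth_def by blast
  then show "\<delta> (\<gamma> t) (\<eta> 0) \<le> \<delta> (\<gamma> t) (\<eta> r)"
    unfolding start Metric_space.commute[OF uniquely_geodesic_imp_Metric_space[OF ug], of "\<gamma> t"] .
qed

text \<open>The geodesic from the foot \<open>g \<sigma>\<close> to \<open>y\<close> is orthogonal to the part of \<open>g\<close> beyond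
  the foot, so by (SO) that part is orthogonal to it.\<close>

lemma SO_nearest_point_tail:
  assumes gs: "geodesic_space X \<delta>" and so: "SO X \<delta>" and g: "geodesic X \<delta> g" and y: "y \<in> X"
    and \<sigma>: "\<sigma> \<in> {0..1}" and nearest: "\<And>r. r \<in> {0..1} \<Longrightarrow> \<delta> y (g \<sigma>) \<le> \<delta> y (g r)"
    and s: "s \<in> {0..1}"
  shows "\<delta> (g \<sigma>) (g (\<sigma> + s * (1 - \<sigma>))) \<le> \<delta> y (g (\<sigma> + s * (1 - \<sigma>)))"
proof -
  interpret Metric_space X \<delta>
    using gs by (simp add: geodesic_space_def)
  have one: "(1::real) \<in> {0..1}"
    by simp
  define b where "b = (\<lambda>v. g (\<sigma> + v * (1 - \<sigma>)))"
  have b: "geodesic X \<delta> b"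
    unfolding b_def using geodesic_subpath[OF g \<sigma> one] by simp
  obtain c where c: "geodesic X \<delta> c" and c0: "c 0 = g \<sigma>" and c1: "c 1 = y"
    using gs geodesic_in[OF g \<sigma>] y unfolding geodesic_space_def by blast
  define R where "R = \<delta> (c 0) (c 1)"
  have "orth \<delta> c b"
    unfolding orth_def
  proof (intro ballI)
    fix v u :: real assume v: "v \<in> {0..1}" and u: "u \<in> {0..1}"
    have "R = \<delta> y (g \<sigma>)"
      unfolding R_def c0 c1 by (rule commute)
    also have "\<dots> \<le> \<delta> y (b v)"
      unfolding b_def by (rule nearest[OF affine_comb_in_unit_interval[OF \<sigma> one v]])
    also have "\<dots> \<le> \<delta> y (c u) + \<delta> (c u) (b v)"
      by (rule triangle[OF y geodesic_in[OF c u] geodesic_in[OF b v]])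
    also have "\<delta> y (c u) = (1 - u) * R"
      using geodesic_dist[OF c one u] c1 u unfolding R_def by simp
    finally have "u * R \<le> \<delta> (c u) (b v)"
      by (simp add: algebra_simps)
    moreover have "\<delta> (c 0) (c u) = u * R"
      using geodesic_dist[OF c _ u, of 0] u unfolding R_def by simp
    ultimately show "\<delta> (c 0) (c u) \<le> \<delta> (b v) (c u)"
      using commute[of "b v" "c u"] by linarith
  qed
  moreover have "b 0 = c 0"
    by (simp add: b_def c0)
  ultimately have "orth \<delta> b c"
    using b c by (intro so[unfolded SO_def, rule_format]) auto
  then show ?thesis
    using s unfolding orth_def b_def c1[symmetric] by simp
qed

section \<open>Ultralimit presentations\<close>

text \<open>A presentation of \<open>(Z, D)\<close> as an ultralimit of the spaces \<open>(N n, e n)\<close> along \<open>F\<close>: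
  the admissible sequences represent the points of \<open>Z\<close> via \<open>\<Phi>\<close>. Besides the ultralimit itself,
  its product with \<open>\<real>\<close> is presented this way by the products \<open>N n \<times> \<real>\<close>.\<close>

locale ultralimit_presentation =
  fixes F :: "'i filter" and N :: "'i \<Rightarrow> 'a set" and e :: "'i \<Rightarrow> 'a \<Rightarrow> 'a \<Rightarrow> real"
    and Z :: "'b set" and D :: "'b \<Rightarrow> 'b \<Rightarrow> real"
    and adm :: "('i \<Rightarrow> 'a) set" and \<Phi> :: "('i \<Rightarrow> 'a) \<Rightarrow> 'b"
  assumes ultrafilter: "ultrafilter F"
    and metric: "\<And>n. Metric_space (N n) (e n)"
    and adm_in: "\<And>a n. a \<in> adm \<Longrightarrow> a n \<in> N n"
    and image_adm: "\<Phi> ` adm = Z"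
    and tendsto_dist: "\<And>a b. a \<in> adm \<Longrightarrow> b \<in> adm \<Longrightarrow> ((\<lambda>n. e n (a n) (b n)) \<longlongrightarrow> D (\<Phi> a) (\<Phi> b)) F"
    and adm_if_dist_bounded: "\<And>a b B. a \<in> adm \<Longrightarrow> (\<And>n. b n \<in> N n) \<Longrightarrow>
      eventually (\<lambda>n. e n (a n) (b n) \<le> B) F \<Longrightarrow> b \<in> adm"
begin

lemma nontrivial: "F \<noteq> bot"
  using ultrafilter by (simp add: ultrafilter_def)

lemma Phi_eq_if_dist_tendsto_0:
  assumes Z: "Metric_space Z D" and a: "a \<in> adm" and b: "b \<in> adm"
    and lim: "((\<lambda>n. e n (a n) (b n)) \<longlongrightarrow> 0) F"
  shows "\<Phi> a = \<Phi> b"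
proof -
  have "D (\<Phi> a) (\<Phi> b) = 0"
    using tendsto_unique[OF nontrivial tendsto_dist[OF a b] lim] .
  then show ?thesis
    using a b image_adm by (auto simp: Metric_space.zero[OF Z])
qed

context
  fixes \<beta> :: "'i \<Rightarrow> real \<Rightarrow> 'a"
  assumes geodesic: "\<And>n. geodesic (N n) (e n) (\<beta> n)"
    and start_adm: "(\<lambda>n. \<beta> n 0) \<in> adm" and end_adm: "(\<lambda>n. \<beta> n 1) \<in> adm"
begin

lemma geodesic_seq_adm:
  assumes r: "\<And>n. r n \<in> {0..1}"
  shows "(\<lambda>n. \<beta> n (r n)) \<in> adm"
proof (rule adm_if_dist_bounded[OF start_adm])
  show "\<beta> n (r n) \<in> N n" for n
    by (rule geodesic_in[OF geodesic r])
  let ?L = "D (\<Phi> (\<lambda>n. \<beta> n 0)) (\<Phi> (\<lambda>n. \<beta> n 1))"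
  have "eventually (\<lambda>n. e n (\<beta> n 0) (\<beta> n 1) < ?L + 1) F"
    by (rule order_tendstoD(2)[OF tendsto_dist[OF start_adm end_adm]]) simp
  then show "eventually (\<lambda>n. e n (\<beta> n 0) (\<beta> n (r n)) \<le> ?L + 1) F"
  proof (rule eventually_mono)
    fix n assume "e n (\<beta> n 0) (\<beta> n 1) < ?L + 1"
    moreover have "e n (\<beta> n 0) (\<beta> n (r n)) = r n * e n (\<beta> n 0) (\<beta> n 1)"
      using geodesic_dist[OF geodesic _ r, of 0 n] r[of n] by simp
    moreover have "r n * e n (\<beta> n 0) (\<beta> n 1) \<le> e n (\<beta> n 0) (\<beta> n 1)"
      using r[of n] Metric_space.nonneg[OF metric] by (intro mult_left_le_one_le) auto
    ultimately show "e n (\<beta> n 0) (\<beta> n (r n)) \<le> ?L + 1"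
      by linarith
  qed
qed

lemma geodesic_seq_dist_tendsto:
  assumes r: "\<And>n. r n \<in> {0..1}" and r': "\<And>n. r' n \<in> {0..1}"
  shows "((\<lambda>n. \<bar>r n - r' n\<bar> * e n (\<beta> n 0) (\<beta> n 1)) \<longlongrightarrow>
    D (\<Phi> (\<lambda>n. \<beta> n (r n))) (\<Phi> (\<lambda>n. \<beta> n (r' n)))) F"
  using tendsto_dist[OF geodesic_seq_adm[OF r] geodesic_seq_adm[OF r']]
  by (simp add: geodesic_dist[OF geodesic r r'])

lemma geodesic_limit: "geodesic Z D (\<lambda>r. \<Phi> (\<lambda>n. \<beta> n r))"
  unfolding geodesic_def
proof (intro conjI ballI)
  show "(\<lambda>r. \<Phi> (\<lambda>n. \<beta> n r)) ` {0..1} \<subseteq> Z"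
    using geodesic_seq_adm image_adm by auto
  fix r r' :: real assume "r \<in> {0..1}" "r' \<in> {0..1}"
  then have "((\<lambda>n. \<bar>r - r'\<bar> * e n (\<beta> n 0) (\<beta> n 1)) \<longlongrightarrow>
      \<bar>r - r'\<bar> * D (\<Phi> (\<lambda>n. \<beta> n 0)) (\<Phi> (\<lambda>n. \<beta> n 1))) F"
    by (intro tendsto_mult_left tendsto_dist start_adm end_adm)
  with geodesic_seq_dist_tendsto[of "\<lambda>_. r" "\<lambda>_. r'"] \<open>r \<in> {0..1}\<close> \<open>r' \<in> {0..1}\<close>
  show "D (\<Phi> (\<lambda>n. \<beta> n r)) (\<Phi> (\<lambda>n. \<beta> n r')) =
      \<bar>r - r'\<bar> * D (\<Phi> (\<lambda>n. \<beta> n 0)) (\<Phi> (\<lambda>n. \<beta> n 1))"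
    by (simp add: tendsto_unique[OF nontrivial])
qed

lemma geodesic_seq_Phi_eq:
  assumes Z: "Metric_space Z D" and r: "\<And>n. r n \<in> {0..1}" and \<rho>: "\<rho> \<in> {0..1}"
    and lim: "(r \<longlongrightarrow> \<rho>) F"
  shows "\<Phi> (\<lambda>n. \<beta> n (r n)) = \<Phi> (\<lambda>n. \<beta> n \<rho>)"
proof (rule Phi_eq_if_dist_tendsto_0[OF Z geodesic_seq_adm[OF r] geodesic_seq_adm])
  have "((\<lambda>n. \<bar>r n - \<rho>\<bar> * e n (\<beta> n 0) (\<beta> n 1)) \<longlongrightarrow>
      \<bar>\<rho> - \<rho>\<bar> * D (\<Phi> (\<lambda>n. \<beta> n 0)) (\<Phi> (\<lambda>n. \<beta> n 1))) F"
    by (intro tendsto_intros lim tendsto_dist start_adm end_adm)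
  then show "((\<lambda>n. e n (\<beta> n (r n)) (\<beta> n \<rho>)) \<longlongrightarrow> 0) F"
    by (simp add: geodesic_dist[OF geodesic r \<rho>])
qed (use \<rho> in simp)

end

lemma lift_geodesic:
  assumes geodesic_spaces: "\<And>n. geodesic_space (N n) (e n)" and ug: "uniquely_geodesic Z D"
    and \<eta>: "geodesic Z D \<eta>"
  obtains \<beta> where "\<And>n. geodesic (N n) (e n) (\<beta> n)" "(\<lambda>n. \<beta> n 0) \<in> adm" "(\<lambda>n. \<beta> n 1) \<in> adm"
    "\<And>r. r \<in> {0..1} \<Longrightarrow> \<Phi> (\<lambda>n. \<beta> n r) = \<eta> r"
proof -
  obtain p q where p: "p \<in> adm" "\<Phi> p = \<eta> 0" and q: "q \<in> adm" "\<Phi> q = \<eta> 1"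
    using geodesic_in[OF \<eta>, of 0] geodesic_in[OF \<eta>, of 1] image_adm by (metis atLeastAtMost_iff imageE order_refl zero_le_one)
  have "\<forall>n. \<exists>g. geodesic (N n) (e n) g \<and> g 0 = p n \<and> g 1 = q n"
    using geodesic_spaces adm_in[OF p(1)] adm_in[OF q(1)] unfolding geodesic_space_def by blast
  then obtain \<beta> where \<beta>: "\<And>n. geodesic (N n) (e n) (\<beta> n)" and "\<And>n. \<beta> n 0 = p n" "\<And>n. \<beta> n 1 = q n"
    by metis
  then have ends: "(\<lambda>n. \<beta> n 0) = p" "(\<lambda>n. \<beta> n 1) = q"
    by auto
  show ?thesis
  proof (rule that[OF \<beta>])
    show "(\<lambda>n. \<beta> n 0) \<in> adm" "(\<lambda>n. \<beta> n 1) \<in> adm"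
      using ends p q by simp_all
    show "\<Phi> (\<lambda>n. \<beta> n r) = \<eta> r" if "r \<in> {0..1}" for r
      using uniquely_geodesicD[OF ug geodesic_limit[OF \<beta>] \<eta> _ _ that] ends p q by simp
  qed
qed

lemma lifted_feet_tendsto_start:
  assumes Z: "Metric_space Z D" and \<eta>: "geodesic Z D \<eta>" and nondegenerate: "\<eta> 0 \<noteq> \<eta> 1"
    and \<beta>: "\<And>n. geodesic (N n) (e n) (\<beta> n)" "(\<lambda>n. \<beta> n 0) \<in> adm" "(\<lambda>n. \<beta> n 1) \<in> adm"
    and lift: "\<And>r. r \<in> {0..1} \<Longrightarrow> \<Phi> (\<lambda>n. \<beta> n r) = \<eta> r"
    and y: "y \<in> adm"
    and unique_foot: "\<And>r. r \<in> {0..1} \<Longrightarrow> D (\<Phi> y) (\<eta> r) \<le> D (\<Phi> y) (\<eta> 0) \<Longrightarrow> \<eta> r = \<eta> 0"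
  obtains \<sigma> where "\<And>n. \<sigma> n \<in> {0..1}"
    and "\<And>n r. r \<in> {0..1} \<Longrightarrow> e n (y n) (\<beta> n (\<sigma> n)) \<le> e n (y n) (\<beta> n r)"
    and "(\<sigma> \<longlongrightarrow> 0) F"
proof -
  have "\<forall>n. \<exists>\<sigma>\<in>{0..1}. \<forall>r\<in>{0..1}. e n (y n) (\<beta> n \<sigma>) \<le> e n (y n) (\<beta> n r)"
    using Metric_space.geodesic_nearest_point_exists[OF metric \<beta>(1) adm_in[OF y]] by blast
  then obtain \<sigma> where \<sigma>: "\<And>n. \<sigma> n \<in> {0..1}"
    and feet: "\<And>n r. r \<in> {0..1} \<Longrightarrow> e n (y n) (\<beta> n (\<sigma> n)) \<le> e n (y n) (\<beta> n r)"
    by metis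
  define \<sigma>\<^sub>0 where "\<sigma>\<^sub>0 = Lim F \<sigma>"
  have lim: "(\<sigma> \<longlongrightarrow> \<sigma>\<^sub>0) F"
    unfolding \<sigma>\<^sub>0_def using \<sigma> by (intro ultrafilter_tendsto_Lim_real[OF ultrafilter, of _ 1] always_eventually) auto
  have \<sigma>\<^sub>0: "\<sigma>\<^sub>0 \<in> {0..1}"
    using tendsto_lowerbound[OF lim _ nontrivial, of 0] tendsto_upperbound[OF lim _ nontrivial, of 1] \<sigma>
    by (auto intro: always_eventually)
  have feet_adm: "(\<lambda>n. \<beta> n (\<sigma> n)) \<in> adm"
    by (rule geodesic_seq_adm[OF \<beta> \<sigma>])
  have foot_limit: "\<Phi> (\<lambda>n. \<beta> n (\<sigma> n)) = \<eta> \<sigma>\<^sub>0"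
    using geodesic_seq_Phi_eq[OF \<beta> Z \<sigma> \<sigma>\<^sub>0 lim] lift[OF \<sigma>\<^sub>0] by simp
  have "D (\<Phi> y) (\<eta> \<sigma>\<^sub>0) \<le> D (\<Phi> y) (\<eta> 0)"
  proof (rule tendsto_le[OF nontrivial])
    show "((\<lambda>n. e n (y n) (\<beta> n 0)) \<longlongrightarrow> D (\<Phi> y) (\<eta> 0)) F"
      using tendsto_dist[OF y \<beta>(2)] lift[of 0] by simp
    show "((\<lambda>n. e n (y n) (\<beta> n (\<sigma> n))) \<longlongrightarrow> D (\<Phi> y) (\<eta> \<sigma>\<^sub>0)) F"
      using tendsto_dist[OF y feet_adm] foot_limit by simp
  qed (use feet in \<open>auto intro: always_eventually\<close>)
  then have "\<eta> \<sigma>\<^sub>0 = \<eta> 0"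
    by (rule unique_foot[OF \<sigma>\<^sub>0])
  then have "\<sigma>\<^sub>0 * D (\<eta> 0) (\<eta> 1) = 0"
    using geodesic_dist[OF \<eta>, of 0 \<sigma>\<^sub>0] \<sigma>\<^sub>0 geodesic_in[OF \<eta> \<sigma>\<^sub>0] Metric_space.mdist_zero[OF Z] by simp
  then have "\<sigma>\<^sub>0 = 0"
    using nondegenerate geodesic_in[OF \<eta>, of 0] geodesic_in[OF \<eta>, of 1] Metric_space.zero[OF Z] by auto
  with lim have "(\<sigma> \<longlongrightarrow> 0) F"
    by simp
  with \<sigma> feet show ?thesis
    by (rule that)
qed

lemma dist_foot_le:
  assumes geodesic_spaces: "\<And>n. geodesic_space (N n) (e n)" and SO_spaces: "\<And>n. SO (N n) (e n)"
    and ug: "uniquely_geodesic Z D" and \<eta>: "geodesic Z D \<eta>" and w: "w \<in> Z"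
    and nearest: "\<And>r. r \<in> {0..1} \<Longrightarrow> D w (\<eta> 0) \<le> D w (\<eta> r)"
    and unique_foot: "\<And>r. r \<in> {0..1} \<Longrightarrow> D w (\<eta> r) = D w (\<eta> 0) \<Longrightarrow> \<eta> r = \<eta> 0"
    and s: "s \<in> {0..1}"
  shows "D (\<eta> 0) (\<eta> s) \<le> D w (\<eta> s)"
proof -
  have Z: "Metric_space Z D"
    by (rule uniquely_geodesic_imp_Metric_space[OF ug])
  show ?thesis
  proof (cases "\<eta> 0 = \<eta> 1")
    case True
    then show ?thesis
      using geodesic_dist[OF \<eta>, of 0 s] s
      by (simp add: Metric_space.mdist_zero[OF Z] Metric_space.nonneg[OF Z] geodesic_in[OF \<eta>])
  next
    case nondegenerate: False
    obtain \<beta> where \<beta>: "\<And>n. geodesic (N n) (e n) (\<beta> n)" "(\<lambda>n. \<beta> n 0) \<in> adm" "(\<lambda>n. \<beta> n 1) \<in> adm"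
      and lift: "\<And>r. r \<in> {0..1} \<Longrightarrow> \<Phi> (\<lambda>n. \<beta> n r) = \<eta> r"
      using lift_geodesic[OF geodesic_spaces ug \<eta>] by blast
    obtain y where y: "y \<in> adm" "\<Phi> y = w"
      using w image_adm by auto
    have "\<eta> r = \<eta> 0" if "r \<in> {0..1}" "D (\<Phi> y) (\<eta> r) \<le> D (\<Phi> y) (\<eta> 0)" for r
      using unique_foot nearest that y(2) by force
    then obtain \<sigma> where \<sigma>: "\<And>n. \<sigma> n \<in> {0..1}"
      and feet: "\<And>n r. r \<in> {0..1} \<Longrightarrow> e n (y n) (\<beta> n (\<sigma> n)) \<le> e n (y n) (\<beta> n r)"
      and \<sigma>_lim: "(\<sigma> \<longlongrightarrow> 0) F"
      using lifted_feet_tendsto_start[OF Z \<eta> nondegenerate \<beta> lift y(1)] by blast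
    define \<tau> where "\<tau> n = \<sigma> n + s * (1 - \<sigma> n)" for n
    have \<tau>: "\<tau> n \<in> {0..1}" for n
      unfolding \<tau>_def using affine_comb_in_unit_interval[OF \<sigma> _ s, of 1] by simp
    have \<tau>_lim: "(\<tau> \<longlongrightarrow> s) F"
      unfolding \<tau>_def by (auto intro!: tendsto_eq_intros \<sigma>_lim)
    have feet_adm: "(\<lambda>n. \<beta> n (\<sigma> n)) \<in> adm" and tail_adm: "(\<lambda>n. \<beta> n (\<tau> n)) \<in> adm"
      by (rule geodesic_seq_adm[OF \<beta> \<sigma>], rule geodesic_seq_adm[OF \<beta> \<tau>])
    have foot: "\<Phi> (\<lambda>n. \<beta> n (\<sigma> n)) = \<eta> 0" and tail: "\<Phi> (\<lambda>n. \<beta> n (\<tau> n)) = \<eta> s"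
      using geodesic_seq_Phi_eq[OF \<beta> Z \<sigma> _ \<sigma>_lim] geodesic_seq_Phi_eq[OF \<beta> Z \<tau> s \<tau>_lim] lift s by auto
    show ?thesis
    proof (rule tendsto_le[OF nontrivial])
      show "((\<lambda>n. e n (y n) (\<beta> n (\<tau> n))) \<longlongrightarrow> D w (\<eta> s)) F"
        using tendsto_dist[OF y(1) tail_adm] y(2) tail by simp
      show "((\<lambda>n. e n (\<beta> n (\<sigma> n)) (\<beta> n (\<tau> n))) \<longlongrightarrow> D (\<eta> 0) (\<eta> s)) F"
        using tendsto_dist[OF feet_adm tail_adm] foot tail by simp
      show "eventually (\<lambda>n. e n (\<beta> n (\<sigma> n)) (\<beta> n (\<tau> n)) \<le> e n (y n) (\<beta> n (\<tau> n))) F"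
        unfolding \<tau>_def
        by (intro always_eventually allI
            SO_nearest_point_tail[OF geodesic_spaces SO_spaces \<beta>(1) adm_in[OF y(1)] \<sigma> feet s])
    qed
  qed
qed

lemma SO_if_unique_feet:
  assumes geodesic_spaces: "\<And>n. geodesic_space (N n) (e n)" and SO_spaces: "\<And>n. SO (N n) (e n)"
    and ug: "uniquely_geodesic Z D"
    and unique_feet: "\<And>\<gamma> \<eta> t s. geodesic Z D \<gamma> \<Longrightarrow> geodesic Z D \<eta> \<Longrightarrow> \<gamma> 0 = \<eta> 0 \<Longrightarrow>
      orth D \<gamma> \<eta> \<Longrightarrow> t \<in> {0<..<1} \<Longrightarrow> s \<in> {0..1} \<Longrightarrow> D (\<gamma> t) (\<eta> s) = D (\<gamma> t) (\<eta> 0) \<Longrightarrow>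
      \<eta> s = \<eta> 0"
  shows "SO Z D"
  unfolding SO_def
proof (intro allI impI, elim conjE)
  interpret Z: Metric_space Z D
    by (rule uniquely_geodesic_imp_Metric_space[OF ug])
  fix \<gamma> \<eta> assume \<gamma>: "geodesic Z D \<gamma>" and \<eta>: "geodesic Z D \<eta>" and start: "\<gamma> 0 = \<eta> 0"
    and orth: "orth D \<gamma> \<eta>"
  show "orth D \<eta> \<gamma>"
  proof (rule Z.orth_if_orth_on_interior[OF \<gamma> \<eta> start])
    fix s t :: real assume s: "s \<in> {0..1}" and t: "t \<in> {0<..<1}"
    have "D (\<gamma> t) (\<eta> 0) \<le> D (\<gamma> t) (\<eta> r)" if "r \<in> {0..1}" for r
      using orth that t start unfolding orth_def by (simp add: Z.commute)
    then show "D (\<eta> 0) (\<eta> s) \<le> D (\<gamma> t) (\<eta> s)"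
      using t by (intro dist_foot_le[OF geodesic_spaces SO_spaces ug \<eta> geodesic_in[OF \<gamma>] _ unique_feet[OF \<gamma> \<eta> start orth t] s]) auto
  qed
qed

end

section \<open>The ultralimit of pointed metric spaces\<close>

definition UL_class :: "nat filter \<Rightarrow> (nat \<Rightarrow> 'a set) \<Rightarrow> (nat \<Rightarrow> 'a \<Rightarrow> 'a \<Rightarrow> real)
    \<Rightarrow> (nat \<Rightarrow> 'a) \<Rightarrow> (nat \<Rightarrow> 'a) \<Rightarrow> (nat \<Rightarrow> 'a) set" where
  "UL_class \<omega> M d x y = {z \<in> UL_seqs \<omega> M d x. UL_pdist \<omega> d y z = 0}"

lemma UL_space_eq_image_UL_class: "UL_space \<omega> M d x = UL_class \<omega> M d x ` UL_seqs \<omega> M d x"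
  by (simp add: UL_space_def UL_class_def)

context
  fixes M :: "nat \<Rightarrow> 'a set" and d :: "nat \<Rightarrow> 'a \<Rightarrow> 'a \<Rightarrow> real" and x :: "nat \<Rightarrow> 'a"
    and \<omega> :: "nat filter"
  assumes metric: "\<And>n. Metric_space (M n) (d n)" and base: "\<And>n. x n \<in> M n"
    and ultrafilter: "ultrafilter \<omega>"
begin

private lemma nontrivial: "\<omega> \<noteq> bot"
  using ultrafilter by (simp add: ultrafilter_def)

lemma UL_seqs_iff:
  "y \<in> UL_seqs \<omega> M d x \<longleftrightarrow> (\<forall>n. y n \<in> M n) \<and> (\<exists>B. eventually (\<lambda>n. d n (y n) (x n) \<le> B) \<omega>)"
  by (simp only: UL_seqs_def mem_Collect_eq ultrafilter_Lim_ereal_less_PInf_iff[OF ultrafilter])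

lemma UL_pdist_tendsto:
  assumes y: "y \<in> UL_seqs \<omega> M d x" and z: "z \<in> UL_seqs \<omega> M d x"
  shows "((\<lambda>n. d n (y n) (z n)) \<longlongrightarrow> UL_pdist \<omega> d y z) \<omega>"
proof -
  have in_M: "y n \<in> M n" "z n \<in> M n" for n
    using y z by (auto simp: UL_seqs_iff)
  obtain B C where "eventually (\<lambda>n. d n (y n) (x n) \<le> B) \<omega>" "eventually (\<lambda>n. d n (z n) (x n) \<le> C) \<omega>"
    using y z by (auto simp: UL_seqs_iff)
  then have "eventually (\<lambda>n. \<bar>d n (y n) (z n)\<bar> \<le> B + C) \<omega>"
  proof eventually_elim
    case (elim n)
    then show ?case
      using Metric_space.triangle[OF metric in_M(1) base in_M(2), of n]
        Metric_space.commute[OF metric, of n "x n" "z n"] Metric_space.nonneg[OF metric, of n]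
      by (simp add: abs_le_iff)
  qed
  then show ?thesis
    unfolding UL_pdist_def by (rule ultrafilter_tendsto_Lim_real[OF ultrafilter])
qed

lemma UL_pdist_self:
  assumes y: "y \<in> UL_seqs \<omega> M d x"
  shows "UL_pdist \<omega> d y y = 0"
proof -
  have "((\<lambda>n. 0) \<longlongrightarrow> UL_pdist \<omega> d y y) \<omega>"
    using UL_pdist_tendsto[OF y y] y by (simp add: UL_seqs_iff Metric_space.mdist_zero[OF metric])
  then show ?thesis
    using tendsto_unique[OF nontrivial _ tendsto_const] by blast
qed

lemma UL_pdist_commute:
  "y \<in> UL_seqs \<omega> M d x \<Longrightarrow> z \<in> UL_seqs \<omega> M d x \<Longrightarrow> UL_pdist \<omega> d y z = UL_pdist \<omega> d z y"
  using UL_pdist_tendsto[of y z] UL_pdist_tendsto[of z y] tendsto_unique[OF nontrivial]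
  by (simp add: Metric_space.commute[OF metric])

lemma UL_pdist_le_if_equiv:
  assumes seqs: "a \<in> UL_seqs \<omega> M d x" "b \<in> UL_seqs \<omega> M d x" "y \<in> UL_seqs \<omega> M d x" "z \<in> UL_seqs \<omega> M d x"
    and ya: "UL_pdist \<omega> d y a = 0" and zb: "UL_pdist \<omega> d z b = 0"
  shows "UL_pdist \<omega> d a b \<le> UL_pdist \<omega> d y z"
proof (rule tendsto_le[OF nontrivial _ UL_pdist_tendsto[OF seqs(1,2)]])
  show "((\<lambda>n. d n (y n) (a n) + d n (y n) (z n) + d n (z n) (b n)) \<longlongrightarrow> UL_pdist \<omega> d y z) \<omega>"
    using tendsto_add[OF tendsto_add[OF UL_pdist_tendsto[OF seqs(3,1)] UL_pdist_tendsto[OF seqs(3,4)]]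
        UL_pdist_tendsto[OF seqs(4,2)]] ya zb by simp
  have in_M: "a n \<in> M n" "b n \<in> M n" "y n \<in> M n" "z n \<in> M n" for n
    using seqs by (auto simp: UL_seqs_iff)
  show "eventually (\<lambda>n. d n (a n) (b n) \<le> d n (y n) (a n) + d n (y n) (z n) + d n (z n) (b n)) \<omega>"
  proof (intro always_eventually allI)
    fix n
    show "d n (a n) (b n) \<le> d n (y n) (a n) + d n (y n) (z n) + d n (z n) (b n)"
      using Metric_space.triangle[OF metric in_M(1,3,2), of n] Metric_space.triangle[OF metric in_M(3,4,2), of n]
        Metric_space.commute[OF metric, of n "a n" "y n"] by linarith
  qed
qed

lemma UL_dist_UL_class:
  assumes y: "y \<in> UL_seqs \<omega> M d x" and z: "z \<in> UL_seqs \<omega> M d x"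
  shows "UL_dist \<omega> d (UL_class \<omega> M d x y) (UL_class \<omega> M d x z) = UL_pdist \<omega> d y z"
proof -
  define a where "a = (SOME a. a \<in> UL_class \<omega> M d x y)"
  define b where "b = (SOME b. b \<in> UL_class \<omega> M d x z)"
  have "a \<in> UL_class \<omega> M d x y" "b \<in> UL_class \<omega> M d x z"
    unfolding a_def b_def by (rule someI[of _ y], simp add: UL_class_def y UL_pdist_self,
        rule someI[of _ z], simp add: UL_class_def z UL_pdist_self)
  then have a: "a \<in> UL_seqs \<omega> M d x" "UL_pdist \<omega> d y a = 0" "UL_pdist \<omega> d a y = 0"
    and b: "b \<in> UL_seqs \<omega> M d x" "UL_pdist \<omega> d z b = 0" "UL_pdist \<omega> d b z = 0"
    using UL_pdist_commute y z by (auto simp: UL_class_def)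
  have "UL_pdist \<omega> d a b = UL_pdist \<omega> d y z"
    using UL_pdist_le_if_equiv[OF a(1) b(1) y z a(2) b(2)] UL_pdist_le_if_equiv[OF y z a(1) b(1) a(3) b(3)]
    by simp
  then show ?thesis
    by (simp add: UL_dist_def a_def b_def)
qed

lemma ultralimit_presentation_UL_space:
  "ultralimit_presentation \<omega> M d (UL_space \<omega> M d x) (UL_dist \<omega> d) (UL_seqs \<omega> M d x) (UL_class \<omega> M d x)"
proof (rule ultralimit_presentation.intro)
  show "ultrafilter \<omega>" "Metric_space (M n) (d n)" for n
    by (rule ultrafilter, rule metric)
  show "a n \<in> M n" if "a \<in> UL_seqs \<omega> M d x" for a n
    using that by (simp add: UL_seqs_iff)
  show "UL_class \<omega> M d x ` UL_seqs \<omega> M d x = UL_space \<omega> M d x"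
    by (simp add: UL_space_eq_image_UL_class)
  show "((\<lambda>n. d n (a n) (b n)) \<longlongrightarrow> UL_dist \<omega> d (UL_class \<omega> M d x a) (UL_class \<omega> M d x b)) \<omega>"
    if "a \<in> UL_seqs \<omega> M d x" "b \<in> UL_seqs \<omega> M d x" for a b
    using UL_pdist_tendsto[OF that] UL_dist_UL_class[OF that] by simp
  show "b \<in> UL_seqs \<omega> M d x"
    if a: "a \<in> UL_seqs \<omega> M d x" and b: "\<And>n. b n \<in> M n" and close: "eventually (\<lambda>n. d n (a n) (b n) \<le> B) \<omega>"
    for a b B
  proof -
    have a_in: "a n \<in> M n" for n
      using a by (simp add: UL_seqs_iff)
    obtain C where "eventually (\<lambda>n. d n (a n) (x n) \<le> C) \<omega>"
      using a by (auto simp: UL_seqs_iff)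
    with close have "eventually (\<lambda>n. d n (b n) (x n) \<le> B + C) \<omega>"
    proof eventually_elim
      case (elim n)
      then show ?case
        using Metric_space.triangle[OF metric b a_in base, of n] Metric_space.commute[OF metric, of n "a n" "b n"]
        by simp
    qed
    with b show ?thesis
      by (auto simp: UL_seqs_iff)
  qed
qed

end

section \<open>Products with the real line\<close>

lemma prod_l2_altdef: "prod_l2 \<delta> a b = sqrt ((\<delta> (fst a) (fst b))\<^sup>2 + (snd a - snd b)\<^sup>2)"
  by (simp add: prod_l2_def)

lemma Metric_space_prod_l2:
  assumes "Metric_space X \<delta>"
  shows "Metric_space (X \<times> (UNIV :: real set)) (prod_l2 \<delta>)"
proof -
  interpret Metric_space X \<delta>
    by (rule assms)
  show ?thesis
  proof
    fix a b :: "'a \<times> real"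
    show "0 \<le> prod_l2 \<delta> a b"
      by (simp add: prod_l2_def)
    show "prod_l2 \<delta> a b = prod_l2 \<delta> b a"
      by (simp add: prod_l2_altdef commute[of "fst a"] power2_commute)
  next
    fix a b :: "'a \<times> real" assume "a \<in> X \<times> UNIV" "b \<in> X \<times> UNIV"
    then show "prod_l2 \<delta> a b = 0 \<longleftrightarrow> a = b"
      by (auto simp: prod_l2_altdef add_nonneg_eq_0_iff prod_eq_iff)
  next
    fix a b c :: "'a \<times> real" assume "a \<in> X \<times> UNIV" "b \<in> X \<times> UNIV" "c \<in> X \<times> UNIV"
    then have "\<delta> (fst a) (fst c) \<le> \<delta> (fst a) (fst b) + \<delta> (fst b) (fst c)"
      by (intro triangle) auto
    then have "prod_l2 \<delta> a c \<le>
        sqrt ((\<delta> (fst a) (fst b) + \<delta> (fst b) (fst c))\<^sup>2 + ((snd a - snd b) + (snd b - snd c))\<^sup>2)"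
      unfolding prod_l2_altdef by (simp add: power_mono)
    also have "\<dots> \<le> prod_l2 \<delta> a b + prod_l2 \<delta> b c"
      unfolding prod_l2_altdef by (rule real_sqrt_sum_squares_triangle_ineq)
    finally show "prod_l2 \<delta> a c \<le> prod_l2 \<delta> a b + prod_l2 \<delta> b c" .
  qed
qed

text \<open>Equality in the triangle inequality of \<open>\<real>\<^sup>2\<close> forces the two vectors to be parallel.\<close>

lemma real_sqrt_sum_squares_triangle_eq:
  fixes a b c e :: real
  assumes eq: "sqrt ((a + b)\<^sup>2 + (c + e)\<^sup>2) = sqrt (a\<^sup>2 + c\<^sup>2) + sqrt (b\<^sup>2 + e\<^sup>2)"
  shows "c * sqrt ((a + b)\<^sup>2 + (c + e)\<^sup>2) = sqrt (a\<^sup>2 + c\<^sup>2) * (c + e)"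
proof -
  define r\<^sub>1 r\<^sub>2 where "r\<^sub>1 = sqrt (a\<^sup>2 + c\<^sup>2)" and "r\<^sub>2 = sqrt (b\<^sup>2 + e\<^sup>2)"
  have sq: "r\<^sub>1\<^sup>2 = a\<^sup>2 + c\<^sup>2" "r\<^sub>2\<^sup>2 = b\<^sup>2 + e\<^sup>2" "(r\<^sub>1 + r\<^sub>2)\<^sup>2 = (a + b)\<^sup>2 + (c + e)\<^sup>2"
    unfolding r\<^sub>1_def r\<^sub>2_def eq[symmetric] by simp_all
  then have "r\<^sub>1 * r\<^sub>2 = a * b + c * e"
    by (simp add: power2_eq_square algebra_simps)
  then have "(a * (r\<^sub>1 + r\<^sub>2) - r\<^sub>1 * (a + b))\<^sup>2 + (c * (r\<^sub>1 + r\<^sub>2) - r\<^sub>1 * (c + e))\<^sup>2 = 0"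
    using sq(1,2) by algebra
  then show "c * sqrt ((a + b)\<^sup>2 + (c + e)\<^sup>2) = r\<^sub>1 * (c + e)"
    unfolding eq r\<^sub>1_def[symmetric] r\<^sub>2_def[symmetric] by (simp add: add_nonneg_eq_0_iff)
qed

context Metric_space
begin

lemma prod_l2_triangle_eq_snd:
  assumes in_M: "fst x \<in> M" "fst y \<in> M" "fst z \<in> M"
    and eq: "prod_l2 d x y + prod_l2 d y z = prod_l2 d x z"
  shows "(snd y - snd x) * prod_l2 d x z = prod_l2 d x y * (snd z - snd x)"
proof -
  define a b c e where "a = d (fst x) (fst y)" and "b = d (fst y) (fst z)"
    and "c = snd y - snd x" and "e = snd z - snd y"
  have xy: "prod_l2 d x y = sqrt (a\<^sup>2 + c\<^sup>2)" and yz: "prod_l2 d y z = sqrt (b\<^sup>2 + e\<^sup>2)"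
    unfolding a_def b_def c_def e_def prod_l2_altdef by (simp_all add: power2_commute)
  have xz: "prod_l2 d x z = sqrt ((d (fst x) (fst z))\<^sup>2 + (c + e)\<^sup>2)"
    unfolding c_def e_def prod_l2_altdef by (simp add: power2_commute)
  have "d (fst x) (fst z) \<le> a + b"
    unfolding a_def b_def by (rule triangle[OF in_M])
  then have "prod_l2 d x z \<le> sqrt ((a + b)\<^sup>2 + (c + e)\<^sup>2)"
    unfolding xz by (simp add: power_mono)
  moreover have "sqrt ((a + b)\<^sup>2 + (c + e)\<^sup>2) \<le> prod_l2 d x z"
    unfolding eq[symmetric] xy yz by (rule real_sqrt_sum_squares_triangle_ineq)
  ultimately have "(d (fst x) (fst z))\<^sup>2 = (a + b)\<^sup>2"
    unfolding xz by simp
  then have additive: "d (fst x) (fst z) = a + b"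
    unfolding a_def b_def by simp
  have "sqrt ((a + b)\<^sup>2 + (c + e)\<^sup>2) = sqrt (a\<^sup>2 + c\<^sup>2) + sqrt (b\<^sup>2 + e\<^sup>2)"
    using eq unfolding xy yz xz additive by simp
  from real_sqrt_sum_squares_triangle_eq[OF this]
  show "(snd y - snd x) * prod_l2 d x z = prod_l2 d x y * (snd z - snd x)"
    unfolding xy xz additive c_def e_def by simp
qed

end

lemma geodesic_prod_l2_snd:
  assumes X: "Metric_space X \<delta>" and \<zeta>: "geodesic (X \<times> (UNIV :: real set)) (prod_l2 \<delta>) \<zeta>"
    and r: "r \<in> {0..1}"
  shows "snd (\<zeta> r) = snd (\<zeta> 0) + r * (snd (\<zeta> 1) - snd (\<zeta> 0))"
proof -
  have ends: "(0::real) \<in> {0..1}" "(1::real) \<in> {0..1}"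
    by simp_all
  have in_X: "fst (\<zeta> r') \<in> X" if "r' \<in> {0..1}" for r'
    using geodesic_in[OF \<zeta> that] by auto
  define R where "R = prod_l2 \<delta> (\<zeta> 0) (\<zeta> 1)"
  show ?thesis
  proof (cases "R = 0")
    case True
    have "prod_l2 \<delta> (\<zeta> r') (\<zeta> 0) = 0" if "r' \<in> {0..1}" for r'
      using geodesic_dist[OF \<zeta> that ends(1)] True by (simp add: R_def)
    then have "\<zeta> r' = \<zeta> 0" if "r' \<in> {0..1}" for r'
      using Metric_space.zero[OF Metric_space_prod_l2[OF X] geodesic_in[OF \<zeta> that] geodesic_in[OF \<zeta> ends(1)]] that by blast
    from this[OF r] this[OF ends(2)] show ?thesis
      by simp
  next
    case False
    have "prod_l2 \<delta> (\<zeta> 0) (\<zeta> r) + prod_l2 \<delta> (\<zeta> r) (\<zeta> 1) = prod_l2 \<delta> (\<zeta> 0) (\<zeta> 1)"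
      using geodesic_dist[OF \<zeta> ends(1) r] geodesic_dist[OF \<zeta> r ends(2)] r by (simp add: algebra_simps)
    from Metric_space.prod_l2_triangle_eq_snd[OF X in_X[OF ends(1)] in_X[OF r] in_X[OF ends(2)] this]
    have "(snd (\<zeta> r) - snd (\<zeta> 0)) * R = (r * (snd (\<zeta> 1) - snd (\<zeta> 0))) * R"
      using geodesic_dist[OF \<zeta> ends(1) r] r by (simp add: R_def)
    then show ?thesis
      using False by simp
  qed
qed

lemma geodesic_prod_l2_fst:
  assumes X: "Metric_space X \<delta>" and \<zeta>: "geodesic (X \<times> (UNIV :: real set)) (prod_l2 \<delta>) \<zeta>"
  shows "geodesic X \<delta> (\<lambda>r. fst (\<zeta> r))"
  unfolding geodesic_def
proof (intro conjI ballI)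
  show "(\<lambda>r. fst (\<zeta> r)) ` {0..1} \<subseteq> X"
    using geodesic_in[OF \<zeta>] by force
  define R c where "R = prod_l2 \<delta> (\<zeta> 0) (\<zeta> 1)" and "c = snd (\<zeta> 1) - snd (\<zeta> 0)"
  have dist_sq: "(\<delta> (fst (\<zeta> t)) (fst (\<zeta> s)))\<^sup>2 = (t - s)\<^sup>2 * (R\<^sup>2 - c\<^sup>2)"
    if t: "t \<in> {0..1}" and s: "s \<in> {0..1}" for t s
  proof -
    have "(prod_l2 \<delta> (\<zeta> t) (\<zeta> s))\<^sup>2 = (\<delta> (fst (\<zeta> t)) (fst (\<zeta> s)))\<^sup>2 + (snd (\<zeta> t) - snd (\<zeta> s))\<^sup>2"
      by (simp add: prod_l2_altdef)
    moreover have "snd (\<zeta> t) - snd (\<zeta> s) = (t - s) * c"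
      using geodesic_prod_l2_snd[OF X \<zeta> t] geodesic_prod_l2_snd[OF X \<zeta> s] by (simp add: c_def algebra_simps)
    moreover have "prod_l2 \<delta> (\<zeta> t) (\<zeta> s) = \<bar>t - s\<bar> * R"
      using geodesic_dist[OF \<zeta> t s] by (simp add: R_def)
    ultimately have "(t - s)\<^sup>2 * R\<^sup>2 = (\<delta> (fst (\<zeta> t)) (fst (\<zeta> s)))\<^sup>2 + (t - s)\<^sup>2 * c\<^sup>2"
      by (simp only: power_mult_distrib power2_abs)
    then show ?thesis
      by (simp add: right_diff_distrib)
  qed
  fix t s :: real assume "t \<in> {0..1}" "s \<in> {0..1}"
  then have "(\<delta> (fst (\<zeta> t)) (fst (\<zeta> s)))\<^sup>2 = (\<bar>t - s\<bar> * \<delta> (fst (\<zeta> 0)) (fst (\<zeta> 1)))\<^sup>2"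
    unfolding power_mult_distrib power2_abs dist_sq[of 0 1, simplified] by (rule dist_sq)
  then show "\<delta> (fst (\<zeta> t)) (fst (\<zeta> s)) = \<bar>t - s\<bar> * \<delta> (fst (\<zeta> 0)) (fst (\<zeta> 1))"
    by (simp add: Metric_space.nonneg[OF X])
qed

lemma geodesic_space_prod_l2:
  assumes X: "geodesic_space X \<delta>"
  shows "geodesic_space (X \<times> (UNIV :: real set)) (prod_l2 \<delta>)"
  unfolding geodesic_space_def
proof (intro conjI ballI)
  show "Metric_space (X \<times> (UNIV :: real set)) (prod_l2 \<delta>)"
    using X by (simp add: geodesic_space_def Metric_space_prod_l2)
  fix p q :: "'a \<times> real" assume "p \<in> X \<times> UNIV" "q \<in> X \<times> UNIV"
  then obtain g where g: "geodesic X \<delta> g" "g 0 = fst p" "g 1 = fst q"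
    using X unfolding geodesic_space_def by (auto simp: mem_Times_iff)
  define h where "h r = (g r, snd p + r * (snd q - snd p))" for r
  have "geodesic (X \<times> UNIV) (prod_l2 \<delta>) h"
    unfolding geodesic_def
  proof (intro conjI ballI)
    show "h ` {0..1} \<subseteq> X \<times> UNIV"
      unfolding h_def using geodesic_in[OF g(1)] by auto
    fix t s :: real assume t: "t \<in> {0..1}" and s: "s \<in> {0..1}"
    define A c where "A = \<delta> (g 0) (g 1)" and "c = snd q - snd p"
    have "prod_l2 \<delta> (h t) (h s) = sqrt ((\<bar>t - s\<bar> * A)\<^sup>2 + ((t - s) * c)\<^sup>2)"
      unfolding h_def prod_l2_altdef A_def c_def using geodesic_dist[OF g(1) t s] by (simp add: algebra_simps)
    also have "\<dots> = \<bar>t - s\<bar> * sqrt (A\<^sup>2 + c\<^sup>2)"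
      by (simp add: power_mult_distrib real_sqrt_mult distrib_left[symmetric])
    also have "sqrt (A\<^sup>2 + c\<^sup>2) = prod_l2 \<delta> (h 0) (h 1)"
      unfolding h_def prod_l2_altdef A_def c_def by (simp add: power2_commute)
    finally show "prod_l2 \<delta> (h t) (h s) = \<bar>t - s\<bar> * prod_l2 \<delta> (h 0) (h 1)" .
  qed
  moreover have "h 0 = p" "h 1 = q"
    unfolding h_def using g by (auto simp: prod_eq_iff)
  ultimately show "\<exists>\<gamma>. geodesic (X \<times> UNIV) (prod_l2 \<delta>) \<gamma> \<and> \<gamma> 0 = p \<and> \<gamma> 1 = q"
    by blast
qed

lemma uniquely_geodesic_prod_l2:
  assumes ug: "uniquely_geodesic X \<delta>"
  shows "uniquely_geodesic (X \<times> (UNIV :: real set)) (prod_l2 \<delta>)"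
  unfolding uniquely_geodesic_def
proof (intro conjI allI impI ballI; (elim conjE)?)
  have X: "Metric_space X \<delta>"
    by (rule uniquely_geodesic_imp_Metric_space[OF ug])
  show "geodesic_space (X \<times> (UNIV :: real set)) (prod_l2 \<delta>)"
    using ug by (simp add: uniquely_geodesic_def geodesic_space_prod_l2)
  fix \<gamma> \<eta> :: "real \<Rightarrow> 'a \<times> real" and t :: real
  assume \<gamma>: "geodesic (X \<times> UNIV) (prod_l2 \<delta>) \<gamma>" and \<eta>: "geodesic (X \<times> UNIV) (prod_l2 \<delta>) \<eta>"
    and ends: "\<gamma> 0 = \<eta> 0" "\<gamma> 1 = \<eta> 1" and t: "t \<in> {0..1}"
  have "fst (\<gamma> t) = fst (\<eta> t)"
    using uniquely_geodesicD[OF ug geodesic_prod_l2_fst[OF X \<gamma>] geodesic_prod_l2_fst[OF X \<eta>] _ _ t] ends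
    by simp
  moreover have "snd (\<gamma> t) = snd (\<eta> t)"
    using geodesic_prod_l2_snd[OF X \<gamma> t] geodesic_prod_l2_snd[OF X \<eta> t] ends by simp
  ultimately show "\<gamma> t = \<eta> t"
    by (simp add: prod_eq_iff)
qed

text \<open>Orthogonality and the triangle inequality put \<open>\<gamma> t\<close> on a shortest path from \<open>\<gamma> 1\<close> to each of
  \<open>\<eta> 0\<close> and \<open>\<eta> s\<close>, with the same distances; \<open>prod_l2_triangle_eq_snd\<close> then gives them equal heights.\<close>

lemma (in Metric_space) orth_foot_height_prod_l2:
  fixes \<gamma> \<eta> :: "real \<Rightarrow> 'a \<times> real"
  assumes \<gamma>: "geodesic (M \<times> UNIV) (prod_l2 d) \<gamma>" and \<eta>: "geodesic (M \<times> UNIV) (prod_l2 d) \<eta>"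
    and start: "\<gamma> 0 = \<eta> 0" and orth: "orth (prod_l2 d) \<gamma> \<eta>"
    and t: "t \<in> {0<..<1}" and s: "s \<in> {0..1}"
    and eq: "prod_l2 d (\<gamma> t) (\<eta> s) = prod_l2 d (\<gamma> t) (\<eta> 0)"
  shows "snd (\<eta> s) = snd (\<eta> 0)"
proof -
  let ?P = "prod_l2 d"
  have P: "Metric_space (M \<times> UNIV) ?P"
    by (rule Metric_space_prod_l2[OF Metric_space_axioms])
  have t01: "t \<in> {0..1}" and ends: "(0::real) \<in> {0..1}" "(1::real) \<in> {0..1}"
    using t by auto
  define p w z k where "p = \<eta> 0" and "w = \<gamma> t" and "z = \<gamma> 1" and "k = \<eta> s"
  have in_P: "p \<in> M \<times> UNIV" "w \<in> M \<times> UNIV" "z \<in> M \<times> UNIV" "k \<in> M \<times> UNIV"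
    unfolding p_def w_def z_def k_def using geodesic_in[OF \<gamma>] geodesic_in[OF \<eta>] t01 s by auto
  define R where "R = ?P p z"
  have pw: "?P p w = t * R" and wz: "?P w z = (1 - t) * R"
    using geodesic_dist[OF \<gamma> ends(1) t01] geodesic_dist[OF \<gamma> t01 ends(2)] t
    unfolding p_def w_def z_def R_def start by auto
  have wk: "?P w k = t * R"
    using eq pw Metric_space.commute[OF P, of p w] by (simp add: w_def k_def p_def)
  show ?thesis
  proof (cases "R = 0")
    case True
    then have "w = p" "w = k"
      using pw wk Metric_space.zero[OF P] in_P Metric_space.commute[OF P, of p w] by auto
    then show ?thesis
      by (simp add: p_def k_def)
  next
    case False
    have "R \<le> ?P k z"
      using orth s start unfolding orth_def R_def p_def k_def z_def by (metis ends(2))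
    moreover have "?P z k \<le> ?P z w + ?P w k"
      by (rule Metric_space.triangle[OF P in_P(3,2,4)])
    ultimately have zk: "?P z k = R" and on_zk: "?P z w + ?P w k = ?P z k"
      using wz wk Metric_space.commute[OF P, of z] by (auto simp: algebra_simps)
    have on_zp: "?P z w + ?P w p = ?P z p"
      using pw wz Metric_space.commute[OF P, of z] Metric_space.commute[OF P, of w p]
      by (simp add: R_def algebra_simps)
    have fst_in: "fst p \<in> M" "fst w \<in> M" "fst z \<in> M" "fst k \<in> M"
      using in_P by auto
    have "(snd w - snd z) * R = ?P z w * (snd k - snd z)"
      using prod_l2_triangle_eq_snd[OF fst_in(3,2,4) on_zk] zk by simp
    moreover have "(snd w - snd z) * R = ?P z w * (snd p - snd z)"
      using prod_l2_triangle_eq_snd[OF fst_in(3,2,1) on_zp] Metric_space.commute[OF P, of z p]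
      by (simp add: R_def)
    moreover have "?P z w \<noteq> 0"
      using wz False t Metric_space.commute[OF P, of z w] by simp
    ultimately show ?thesis
      by (simp add: p_def k_def)
  qed
qed

lemma orth_unique_feet_prod_l2:
  fixes \<gamma> \<eta> :: "real \<Rightarrow> 'a \<times> real"
  assumes ug: "uniquely_geodesic X \<delta>" and proj: "unique_projections X \<delta>"
    and \<gamma>: "geodesic (X \<times> UNIV) (prod_l2 \<delta>) \<gamma>" and \<eta>: "geodesic (X \<times> UNIV) (prod_l2 \<delta>) \<eta>"
    and start: "\<gamma> 0 = \<eta> 0" and orth: "orth (prod_l2 \<delta>) \<gamma> \<eta>"
    and t: "t \<in> {0<..<1}" and s: "s \<in> {0..1}"
    and eq: "prod_l2 \<delta> (\<gamma> t) (\<eta> s) = prod_l2 \<delta> (\<gamma> t) (\<eta> 0)"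
  shows "\<eta> s = \<eta> 0"
proof -
  have X: "Metric_space X \<delta>"
    by (rule uniquely_geodesic_imp_Metric_space[OF ug])
  have height: "snd (\<eta> s) = snd (\<eta> 0)"
    by (rule Metric_space.orth_foot_height_prod_l2[OF X \<gamma> \<eta> start orth t s eq])
  then have "s = 0 \<or> snd (\<eta> 1) = snd (\<eta> 0)"
    using geodesic_prod_l2_snd[OF X \<eta> s] by simp
  then show ?thesis
  proof
    assume level: "snd (\<eta> 1) = snd (\<eta> 0)"
    define w where "w = \<gamma> t"
    have w: "fst w \<in> X"
      using geodesic_in[OF \<gamma>, of t] t by (auto simp: w_def)
    have zero: "(0::real) \<in> {0..1}"
      by simp
    have dist_w: "prod_l2 \<delta> w (\<eta> r) = sqrt ((\<delta> (fst w) (fst (\<eta> r)))\<^sup>2 + (snd w - snd (\<eta> 0))\<^sup>2)"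
      if "r \<in> {0..1}" for r
      using geodesic_prod_l2_snd[OF X \<eta> that] level by (simp add: prod_l2_altdef)
    have "\<delta> (fst w) (fst (\<eta> 0)) \<le> \<delta> (fst w) (fst (\<eta> r))" if r: "r \<in> {0..1}" for r
    proof -
      have "prod_l2 \<delta> (\<gamma> 0) (\<gamma> t) \<le> prod_l2 \<delta> (\<eta> r) (\<gamma> t)"
        using orth[unfolded orth_def, rule_format, OF r, of t] t by simp
      then have "prod_l2 \<delta> w (\<eta> 0) \<le> prod_l2 \<delta> w (\<eta> r)"
        unfolding w_def start Metric_space.commute[OF Metric_space_prod_l2[OF X], of "\<gamma> t"] .
      then have "(\<delta> (fst w) (fst (\<eta> 0)))\<^sup>2 \<le> (\<delta> (fst w) (fst (\<eta> r)))\<^sup>2"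
        unfolding dist_w[OF r] dist_w[OF zero] real_sqrt_le_iff by linarith
      then show ?thesis
        by (rule power2_le_imp_le[OF _ Metric_space.nonneg[OF X]])
    qed
    moreover have "\<delta> (fst w) (fst (\<eta> s)) = \<delta> (fst w) (fst (\<eta> 0))"
      using eq unfolding w_def[symmetric] dist_w[OF s] dist_w[OF zero] real_sqrt_eq_iff
      by (simp add: Metric_space.nonneg[OF X])
    ultimately have "fst (\<eta> s) = fst (\<eta> 0)"
      using geodesic_nearest_point_unique[OF ug proj geodesic_prod_l2_fst[OF X \<eta>] w _ s] by blast
    with height show ?thesis
      by (simp add: prod_eq_iff)
  qed simp
qed

lemma (in ultralimit_presentation) ultralimit_presentation_prod_l2:
  "ultralimit_presentation F (\<lambda>n. N n \<times> (UNIV :: real set)) (\<lambda>n. prod_l2 (e n))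
    (Z \<times> (UNIV :: real set)) (prod_l2 D)
    {a. (\<lambda>n. fst (a n)) \<in> adm \<and> (\<exists>B. eventually (\<lambda>n. \<bar>snd (a n)\<bar> \<le> B) F)}
    (\<lambda>a. (\<Phi> (\<lambda>n. fst (a n)), Lim F (\<lambda>n. snd (a n))))"
  (is "ultralimit_presentation _ _ _ _ _ ?adm ?\<Phi>")
proof (rule ultralimit_presentation.intro)
  have snd_tendsto: "((\<lambda>n. snd (a n)) \<longlongrightarrow> Lim F (\<lambda>n. snd (a n))) F" if a: "a \<in> ?adm" for a
  proof -
    obtain B where "eventually (\<lambda>n. \<bar>snd (a n)\<bar> \<le> B) F"
      using a by blast
    then show ?thesis
      by (rule ultrafilter_tendsto_Lim_real[OF ultrafilter])
  qed
  show "ultrafilter F"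
    by (rule ultrafilter)
  show "Metric_space (N n \<times> UNIV) (prod_l2 (e n))" for n
    by (rule Metric_space_prod_l2[OF metric])
  show "a n \<in> N n \<times> UNIV" if "a \<in> ?adm" for a n
    using adm_in[of "\<lambda>n. fst (a n)"] that by (simp add: mem_Times_iff)
  show "?\<Phi> ` ?adm = Z \<times> UNIV"
  proof (intro equalityI subsetI)
    fix p assume "p \<in> ?\<Phi> ` ?adm"
    then obtain a where "(\<lambda>n. fst (a n)) \<in> adm" and p: "p = ?\<Phi> a"
      by blast
    then have "\<Phi> (\<lambda>n. fst (a n)) \<in> Z"
      using image_adm by blast
    then show "p \<in> Z \<times> UNIV"
      by (simp add: p)
  next
    fix p :: "'b \<times> real" assume "p \<in> Z \<times> UNIV"
    then obtain y where y: "y \<in> adm" "\<Phi> y = fst p"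
      using image_adm by (metis imageE mem_Times_iff)
    have "Lim F (\<lambda>n. snd p) = snd p"
      by (rule tendsto_Lim[OF nontrivial tendsto_const])
    then have "p = ?\<Phi> (\<lambda>n. (y n, snd p))"
      using y by (simp add: prod_eq_iff)
    moreover have "(\<lambda>n. (y n, snd p)) \<in> ?adm"
      using y by (auto intro!: exI[of _ "\<bar>snd p\<bar>"])
    ultimately show "p \<in> ?\<Phi> ` ?adm"
      by (rule rev_image_eqI[rotated])
  qed
  show "((\<lambda>n. prod_l2 (e n) (a n) (b n)) \<longlongrightarrow> prod_l2 D (?\<Phi> a) (?\<Phi> b)) F"
    if a: "a \<in> ?adm" and b: "b \<in> ?adm" for a b
  proof -
    have "((\<lambda>n. e n (fst (a n)) (fst (b n))) \<longlongrightarrow> D (\<Phi> (\<lambda>n. fst (a n))) (\<Phi> (\<lambda>n. fst (b n)))) F"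
      using a b by (intro tendsto_dist) simp_all
    from tendsto_real_sqrt[OF tendsto_add[OF tendsto_power[OF this, of 2]
          tendsto_power[OF tendsto_diff[OF snd_tendsto[OF a] snd_tendsto[OF b]], of 2]]]
    show ?thesis
      by (simp only: prod_l2_altdef fst_conv snd_conv)
  qed
  show "b \<in> ?adm"
    if a: "a \<in> ?adm" and b: "\<And>n. b n \<in> N n \<times> UNIV"
      and close: "eventually (\<lambda>n. prod_l2 (e n) (a n) (b n) \<le> B) F" for a b B
  proof -
    obtain C where C: "eventually (\<lambda>n. \<bar>snd (a n)\<bar> \<le> C) F"
      using a by blast
    have fst_le: "e n (fst (a n)) (fst (b n)) \<le> prod_l2 (e n) (a n) (b n)" for n
      unfolding prod_l2_altdef by (rule real_sqrt_sum_squares_ge1)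
    have "eventually (\<lambda>n. e n (fst (a n)) (fst (b n)) \<le> B) F"
      using close by (rule eventually_mono) (use fst_le in \<open>rule order_trans\<close>)
    moreover have "fst (b n) \<in> N n" for n
      using b[of n] by (simp add: mem_Times_iff)
    ultimately have "(\<lambda>n. fst (b n)) \<in> adm"
      using adm_if_dist_bounded[of "\<lambda>n. fst (a n)" "\<lambda>n. fst (b n)" B] a by simp
    moreover have "eventually (\<lambda>n. \<bar>snd (b n)\<bar> \<le> C + B) F"
      using C close
    proof eventually_elim
      case (elim n)
      have "\<bar>snd (a n) - snd (b n)\<bar> \<le> prod_l2 (e n) (a n) (b n)"
        unfolding prod_l2_def by (rule real_sqrt_sum_squares_ge2)
      then show ?case
        using elim by linarith
    qed
    ultimately show ?thesis
      unfolding mem_Collect_eq by blast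
  qed
qed

theorem lemma20:
  fixes M :: "nat \<Rightarrow> 'a set" and d :: "nat \<Rightarrow> 'a \<Rightarrow> 'a \<Rightarrow> real"
    and x :: "nat \<Rightarrow> 'a" and \<omega> :: "nat filter"
  assumes geo: "\<And>n. geodesic_space (M n) (d n)"
    and base: "\<And>n. x n \<in> M n"
    and ultra: "nonprincipal_ultrafilter \<omega>"
    and ug: "uniquely_geodesic (UL_space \<omega> M d x) (UL_dist \<omega> d)"
    and proj: "unique_projections (UL_space \<omega> M d x) (UL_dist \<omega> d)"
  shows "((\<forall>n. SO (M n) (d n)) \<longrightarrow> SO (UL_space \<omega> M d x) (UL_dist \<omega> d)) \<and>
         ((\<forall>n. SO_star (M n) (d n)) \<longrightarrow> SO_star (UL_space \<omega> M d x) (UL_dist \<omega> d))"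
proof -
  have "ultrafilter \<omega>"
    using ultra by (simp add: nonprincipal_ultrafilter_def ultrafilter_def)
  moreover have "\<And>n. Metric_space (M n) (d n)"
    using geo by (simp add: geodesic_space_def)
  ultimately interpret UL: ultralimit_presentation \<omega> M d "UL_space \<omega> M d x" "UL_dist \<omega> d"
      "UL_seqs \<omega> M d x" "UL_class \<omega> M d x"
    using base by (intro ultralimit_presentation_UL_space)
  show ?thesis
  proof (intro conjI impI)
    assume "\<forall>n. SO (M n) (d n)"
    then show "SO (UL_space \<omega> M d x) (UL_dist \<omega> d)"
      by (intro UL.SO_if_unique_feet[OF geo _ ug] orth_unique_feet[OF ug proj]) auto
  next
    assume "\<forall>n. SO_star (M n) (d n)"
    then show "SO_star (UL_space \<omega> M d x) (UL_dist \<omega> d)"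
      unfolding SO_star_def
      by (intro ultralimit_presentation.SO_if_unique_feet[OF UL.ultralimit_presentation_prod_l2]
          geodesic_space_prod_l2 geo uniquely_geodesic_prod_l2 ug
          orth_unique_feet_prod_l2[OF ug proj]) auto
  qed
qed

end
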